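(* Let $q$ be an odd positive integer and $m$ a positive integer. If $P_m$ divides $Q_q$, then $m\leq q$ and $m\mid q\cdot 2^{q-1}$.
   Context: $Q_q$ denotes the $q$-dimensional hypercube graph (vertices are $q$-tuples of $0$'s and $1$'s, adjacent iff they differ in exactly one coordinate). $P_m$ denotes the path with $m$ edges. For graphs $H$ and $G$, "$H$ divides $G$" means there is a collection of subgraphs $H_i$ of $G$, each isomorphic to $H$, such that $E(G)$ is the disjoint union of the edge sets $E(H_i)$. *)

theory Defs
  imports Main
begin

definition hypercube_vertices :: "nat \<Rightarrow> bool list set" where
  "hypercube_vertices q = {xs. length xs = q}"

definition hamming :: "bool list \<Rightarrow> bool list \<Rightarrow> nat" where
  "hamming xs ys = card {i. i < length xs \<and> xs ! i \<noteq> ys ! i}"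

definition hypercube_edges :: "nat \<Rightarrow> bool list set set" where
  "hypercube_edges q = {{u, v} | u v. u \<in> hypercube_vertices q \<and> v \<in> hypercube_vertices q
                                    \<and> hamming u v = 1}"

text \<open>A subgraph of (V,E) isomorphic to the path P_m (m edges): given by an injective
  vertex sequence p 0, ..., p m with consecutive vertices adjacent; its edge set is
  the set of the m edges {p i, p (i+1)}.\<close>

definition path_edges :: "(nat \<Rightarrow> 'a) \<Rightarrow> nat \<Rightarrow> 'a set set" where
  "path_edges p m = {{p i, p (Suc i)} | i. i < m}"

definition is_path_in :: "'a set \<Rightarrow> 'a set set \<Rightarrow> (nat \<Rightarrow> 'a) \<Rightarrow> nat \<Rightarrow> bool" where
  "is_path_in V E p m \<longleftrightarrow> inj_on p {0..m} \<and> (\<forall>i\<le>m. p i \<in> V) \<and> path_edges p m \<subseteq> E"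

definition path_divides_hypercube :: "nat \<Rightarrow> nat \<Rightarrow> bool" where
  "path_divides_hypercube m q \<longleftrightarrow>
     (\<exists>(I :: nat set) (ps :: nat \<Rightarrow> nat \<Rightarrow> bool list).
        (\<forall>j\<in>I. is_path_in (hypercube_vertices q) (hypercube_edges q) (ps j) m)
      \<and> (\<forall>j\<in>I. \<forall>k\<in>I. j \<noteq> k \<longrightarrow> path_edges (ps j) m \<inter> path_edges (ps k) m = {})
      \<and> (\<Union>j\<in>I. path_edges (ps j) m) = hypercube_edges q)"

end

theory Submission imports Defs begin

text \<open>Q_q has 2^q vertices, each of degree q, hence q 2^(q-1) edges; a decomposition into
  paths with m edges therefore consists of q 2^(q-1) / m paths, so m divides q 2^(q-1).
  An interior vertex of a path meets an even number of its edges, so a vertex of odd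
  degree must be an endpoint of some path.  For odd q all 2^q vertices have odd degree,
  so 2^q is at most twice the number of paths, 2 q 2^(q-1) / m, i.e. m \<le> q.\<close>

definition degree :: "'a set set \<Rightarrow> 'a \<Rightarrow> nat" where
  "degree E v = card {e \<in> E. v \<in> e}"

lemma handshake:
  assumes "finite V" "finite E" and "\<And>e. e \<in> E \<Longrightarrow> card e = 2 \<and> e \<subseteq> V"
  shows "(\<Sum>v\<in>V. degree E v) = 2 * card E"
proof -
  have "(\<Sum>v\<in>V. degree E v) = (\<Sum>v\<in>V. \<Sum>e\<in>E. if v \<in> e then 1 else 0)"
    unfolding degree_def card_eq_sum by (intro sum.cong refl sum.inter_filter \<open>finite E\<close>)
  also have "\<dots> = (\<Sum>e\<in>E. \<Sum>v\<in>V. if v \<in> e then 1 else 0)"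
    by (rule sum.swap)
  also have "\<dots> = (\<Sum>e\<in>E. card e)"
  proof (rule sum.cong)
    fix e assume "e \<in> E"
    then have "{v \<in> V. v \<in> e} = e" using assms(3) by blast
    moreover have "(\<Sum>v\<in>V. if v \<in> e then 1 else 0) = card {v \<in> V. v \<in> e}"
      by (subst card_eq_sum) (rule sum.inter_filter[OF \<open>finite V\<close>, symmetric])
    ultimately show "(\<Sum>v\<in>V. if v \<in> e then 1 else 0) = card e" by simp
  qed simp
  finally show ?thesis using assms(3) by simp
qed

lemma degree_UN_disjoint:
  assumes "finite I" "\<And>j. j \<in> I \<Longrightarrow> finite (A j)"
    and "\<And>j k. j \<in> I \<Longrightarrow> k \<in> I \<Longrightarrow> j \<noteq> k \<Longrightarrow> A j \<inter> A k = {}"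
  shows "degree (\<Union>j\<in>I. A j) v = (\<Sum>j\<in>I. degree (A j) v)"
proof -
  have "{e \<in> (\<Union>j\<in>I. A j). v \<in> e} = (\<Union>j\<in>I. {e \<in> A j. v \<in> e})" by blast
  moreover have "card (\<Union>j\<in>I. {e \<in> A j. v \<in> e}) = (\<Sum>j\<in>I. card {e \<in> A j. v \<in> e})"
    using assms by (intro card_UN_disjoint) auto
  ultimately show ?thesis by (simp add: degree_def)
qed

lemma card_path_edges:
  assumes "inj_on p {0..m}"
  shows "card (path_edges p m) = m"
proof -
  have "inj_on (\<lambda>i. {p i, p (Suc i)}) {..<m}"
  proof (rule inj_onI)
    fix i j assume "i \<in> {..<m}" "j \<in> {..<m}" "{p i, p (Suc i)} = {p j, p (Suc j)}"
    moreover have "p a = p b \<longleftrightarrow> a = b" if "a \<le> m" "b \<le> m" for a b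
      using assms that by (auto dest: inj_onD)
    ultimately show "i = j" by (auto simp: doubleton_eq_iff)
  qed
  moreover have "path_edges p m = (\<lambda>i. {p i, p (Suc i)}) ` {..<m}"
    unfolding path_edges_def by auto
  ultimately show ?thesis by (simp add: card_image)
qed

lemma even_degree_path_edges:
  assumes inj: "inj_on p {0..m}" and "v \<noteq> p 0" "v \<noteq> p m"
  shows "even (degree (path_edges p m) v)"
proof (cases "v \<in> p ` {0..m}")
  case False
  then have "{e \<in> path_edges p m. v \<in> e} = {}"
    unfolding path_edges_def by fastforce
  then show ?thesis unfolding degree_def by (metis card.empty even_zero)
next
  case True
  then obtain k where k: "k \<le> m" "v = p k" by auto
  with assms obtain j where j: "k = Suc j" "Suc k \<le> m"
    by (metis le_neq_implies_less Suc_leI not0_implies_Suc)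
  have p_eq: "p a = p b \<longleftrightarrow> a = b" if "a \<le> m" "b \<le> m" for a b
    using inj that by (auto dest: inj_onD)
  have "{e \<in> path_edges p m. v \<in> e} = {{p j, p k}, {p k, p (Suc k)}}"
    using k j p_eq unfolding path_edges_def
    by (auto; metis Suc_leI Suc_n_not_le_n le_SucI le_trans less_or_eq_imp_le)
  moreover have "{p j, p k} \<noteq> {p k, p (Suc k)}"
    using p_eq[of j "Suc k"] p_eq[of j k] j by (auto simp: doubleton_eq_iff)
  ultimately show ?thesis by (simp add: degree_def)
qed

definition path_decomposition :: "'a set set \<Rightarrow> 'i set \<Rightarrow> ('i \<Rightarrow> nat \<Rightarrow> 'a) \<Rightarrow> nat \<Rightarrow> bool" where
  "path_decomposition E I ps m \<longleftrightarrow>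
     (\<forall>j\<in>I. inj_on (ps j) {0..m})
   \<and> (\<forall>j\<in>I. \<forall>k\<in>I. j \<noteq> k \<longrightarrow> path_edges (ps j) m \<inter> path_edges (ps k) m = {})
   \<and> (\<Union>j\<in>I. path_edges (ps j) m) = E"

lemma path_decompositionD:
  assumes "path_decomposition E I ps m"
  shows "j \<in> I \<Longrightarrow> inj_on (ps j) {0..m}"
    and "j \<in> I \<Longrightarrow> k \<in> I \<Longrightarrow> j \<noteq> k \<Longrightarrow> path_edges (ps j) m \<inter> path_edges (ps k) m = {}"
    and "j \<in> I \<Longrightarrow> path_edges (ps j) m \<subseteq> E"
    and "(\<Union>j\<in>I. path_edges (ps j) m) = E"
  using assms unfolding path_decomposition_def by blast+

lemma path_decomposition_finite_index:
  assumes pd: "path_decomposition E I ps m" and "finite E" "m > 0"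
  shows "finite I"
proof -
  have "inj_on (\<lambda>j. path_edges (ps j) m) I"
  proof (rule inj_onI)
    fix j k assume jk: "j \<in> I" "k \<in> I" "path_edges (ps j) m = path_edges (ps k) m"
    have "path_edges (ps j) m \<noteq> {}"
      using card_path_edges[OF path_decompositionD(1)[OF pd \<open>j \<in> I\<close>]] \<open>m > 0\<close> by auto
    with jk path_decompositionD(2)[OF pd] show "j = k" by auto
  qed
  moreover have "(\<lambda>j. path_edges (ps j) m) ` I \<subseteq> Pow E"
    using path_decompositionD(3)[OF pd] by auto
  ultimately show ?thesis
    using \<open>finite E\<close> by (metis finite_Pow_iff finite_imageD finite_subset)
qed

lemma card_path_decomposition:
  assumes pd: "path_decomposition E I ps m" and "finite E" "m > 0"
  shows "card E = card I * m"
proof -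
  have "card E = (\<Sum>j\<in>I. card (path_edges (ps j) m))"
    unfolding path_decompositionD(4)[OF pd, symmetric]
    using path_decomposition_finite_index[OF assms] path_decompositionD(2,3)[OF pd]
      finite_subset[OF _ \<open>finite E\<close>]
    by (intro card_UN_disjoint) auto
  also have "\<dots> = card I * m"
    using path_decompositionD(1)[OF pd] by (simp add: card_path_edges)
  finally show ?thesis .
qed

lemma odd_degree_path_decomposition:
  assumes pd: "path_decomposition E I ps m" and "finite E" "m > 0" and "odd (degree E v)"
  shows "\<exists>j\<in>I. v = ps j 0 \<or> v = ps j m"
proof (rule ccontr)
  assume "\<not> ?thesis"
  then have "even (degree (path_edges (ps j) m) v)" if "j \<in> I" for j
    using path_decompositionD(1)[OF pd that] that by (auto intro: even_degree_path_edges)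
  moreover have "degree E v = (\<Sum>j\<in>I. degree (path_edges (ps j) m) v)"
    unfolding path_decompositionD(4)[OF pd, symmetric]
    using path_decomposition_finite_index[OF assms(1-3)] path_decompositionD(2,3)[OF pd]
      finite_subset[OF _ \<open>finite E\<close>]
    by (intro degree_UN_disjoint) auto
  ultimately show False using assms(4) by (simp add: dvd_sum)
qed

lemma card_odd_degree_path_decomposition:
  assumes "path_decomposition E I ps m" "finite E" "m > 0" and "\<And>v. v \<in> S \<Longrightarrow> odd (degree E v)"
  shows "card S \<le> 2 * card I"
proof -
  have fin: "finite I" by (rule path_decomposition_finite_index[OF assms(1-3)])
  have "S \<subseteq> (\<Union>j\<in>I. {ps j 0, ps j m})"
    using odd_degree_path_decomposition[OF assms(1-3)] assms(4) by blast
  then have "card S \<le> card (\<Union>j\<in>I. {ps j 0, ps j m})"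
    using fin by (intro card_mono) auto
  also have "\<dots> \<le> (\<Sum>j\<in>I. card {ps j 0, ps j m})"
    by (rule card_UN_le[OF fin])
  also have "\<dots> \<le> (\<Sum>j\<in>I. 2)"
    by (intro sum_mono) (simp add: card_insert_le_m1)
  finally show ?thesis by simp
qed

lemma card_hypercube_vertices: "card (hypercube_vertices q) = 2 ^ q"
  and finite_hypercube_vertices: "finite (hypercube_vertices q)"
  using card_lists_length_eq[of "UNIV :: bool set" q] finite_lists_length_eq[of "UNIV :: bool set" q]
  by (simp_all add: hypercube_vertices_def)

lemma hamming_commute: "length u = length v \<Longrightarrow> hamming u v = hamming v u"
  unfolding hamming_def by (rule arg_cong[where f = card]) auto

lemma hamming_eq_1_iff:
  assumes "length u = q" "length v = q"
  shows "hamming u v = 1 \<longleftrightarrow> (\<exists>i<q. v = u[i := \<not> u ! i])"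
proof
  assume "hamming u v = 1"
  then obtain i where S: "{i. i < length u \<and> u ! i \<noteq> v ! i} = {i}"
    unfolding hamming_def by (auto simp: card_Suc_eq)
  have "v = u[i := \<not> u ! i]"
  proof (rule nth_equalityI)
    fix j assume "j < length v"
    then show "v ! j = u[i := \<not> u ! i] ! j"
      using S assms by (cases "j = i") auto
  qed (use assms in simp)
  moreover have "i < q" using S assms by auto
  ultimately show "\<exists>i<q. v = u[i := \<not> u ! i]" by blast
next
  assume "\<exists>i<q. v = u[i := \<not> u ! i]"
  then obtain i where "i < q" "v = u[i := \<not> u ! i]" by blast
  then have "{i. i < length u \<and> u ! i \<noteq> v ! i} = {i}" using assms by (auto simp: nth_list_update)
  then show "hamming u v = 1" by (simp add: hamming_def)
qed

lemma hypercube_edgeE: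
  assumes "e \<in> hypercube_edges q"
  obtains u v where "e = {u, v}" "u \<in> hypercube_vertices q" "v \<in> hypercube_vertices q" "u \<noteq> v"
  using assms unfolding hypercube_edges_def hamming_def by fastforce

lemma finite_hypercube_edges: "finite (hypercube_edges q)"
proof (rule finite_subset)
  show "hypercube_edges q \<subseteq> Pow (hypercube_vertices q)"
    by (auto elim: hypercube_edgeE)
qed (simp add: finite_hypercube_vertices)

lemma hypercube_edges_at:
  assumes "v \<in> hypercube_vertices q"
  shows "{e \<in> hypercube_edges q. v \<in> e} = (\<lambda>i. {v, v[i := \<not> v ! i]}) ` {..<q}"
proof -
  have lv: "length v = q" using assms by (simp add: hypercube_vertices_def)
  have edge_iff: "{v, w} \<in> hypercube_edges q \<longleftrightarrow> (\<exists>i<q. w = v[i := \<not> v ! i])" for w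
  proof
    assume "{v, w} \<in> hypercube_edges q"
    then obtain a b where ab: "{v, w} = {a, b}" "length a = q" "length b = q" "hamming a b = 1"
      unfolding hypercube_edges_def hypercube_vertices_def by auto
    then have "length w = q \<and> hamming v w = 1"
      using hamming_commute[of a b] by (auto simp: doubleton_eq_iff)
    then show "\<exists>i<q. w = v[i := \<not> v ! i]" using hamming_eq_1_iff lv by blast
  next
    assume "\<exists>i<q. w = v[i := \<not> v ! i]"
    then have "length w = q" "hamming v w = 1" using hamming_eq_1_iff lv by auto
    then show "{v, w} \<in> hypercube_edges q"
      using assms unfolding hypercube_edges_def hypercube_vertices_def by blast
  qed
  show ?thesis
  proof (rule set_eqI, rule iffI)
    fix e assume "e \<in> {e \<in> hypercube_edges q. v \<in> e}"
    then have e: "e \<in> hypercube_edges q" "v \<in> e" by auto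
    then obtain a b where "e = {a, b}" by (auto elim: hypercube_edgeE)
    with e obtain w where "e = {v, w}" by blast
    with e show "e \<in> (\<lambda>i. {v, v[i := \<not> v ! i]}) ` {..<q}" using edge_iff by auto
  next
    fix e assume "e \<in> (\<lambda>i. {v, v[i := \<not> v ! i]}) ` {..<q}"
    then show "e \<in> {e \<in> hypercube_edges q. v \<in> e}" using edge_iff by auto
  qed
qed

lemma degree_hypercube:
  assumes "v \<in> hypercube_vertices q"
  shows "degree (hypercube_edges q) v = q"
proof -
  have lv: "length v = q" using assms by (simp add: hypercube_vertices_def)
  have "inj_on (\<lambda>i. {v, v[i := \<not> v ! i]}) {..<q}"
  proof (rule inj_onI)
    fix i j assume "i \<in> {..<q}" "j \<in> {..<q}" "{v, v[i := \<not> v ! i]} = {v, v[j := \<not> v ! j]}"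
    then have "v[i := \<not> v ! i] ! i = v[j := \<not> v ! j] ! i"
      by (metis doubleton_eq_iff)
    then show "i = j" using \<open>i \<in> {..<q}\<close> lv by (cases "i = j") auto
  qed
  then show ?thesis
    by (simp add: degree_def hypercube_edges_at[OF assms] card_image)
qed

lemma card_hypercube_edges: "2 * card (hypercube_edges q) = q * 2 ^ q"
proof -
  have "2 * card (hypercube_edges q) = (\<Sum>v\<in>hypercube_vertices q. degree (hypercube_edges q) v)"
    by (rule handshake[symmetric, OF finite_hypercube_vertices finite_hypercube_edges])
      (auto elim: hypercube_edgeE)
  also have "\<dots> = q * 2 ^ q"
    by (simp add: degree_hypercube card_hypercube_vertices)
  finally show ?thesis .
qed

lemma path_divides_hypercube_decomposition:
  assumes "path_divides_hypercube m q"
  obtains I :: "nat set" and ps where "path_decomposition (hypercube_edges q) I ps m"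
proof -
  from assms obtain I :: "nat set" and ps where
    "\<forall>j\<in>I. is_path_in (hypercube_vertices q) (hypercube_edges q) (ps j) m"
    "\<forall>j\<in>I. \<forall>k\<in>I. j \<noteq> k \<longrightarrow> path_edges (ps j) m \<inter> path_edges (ps k) m = {}"
    "(\<Union>j\<in>I. path_edges (ps j) m) = hypercube_edges q"
    unfolding path_divides_hypercube_def by blast
  then have "path_decomposition (hypercube_edges q) I ps m"
    by (simp add: path_decomposition_def is_path_in_def)
  then show thesis by (rule that)
qed

theorem theorem4:
  fixes q m :: nat
  assumes "odd q" and "q > 0" and "m > 0"
    and "path_divides_hypercube m q"
  shows "m \<le> q \<and> m dvd q * 2 ^ (q - 1)"
proof -
  let ?E = "hypercube_edges q"
  obtain I :: "nat set" and ps where pd: "path_decomposition ?E I ps m"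
    using assms(4) by (rule path_divides_hypercube_decomposition)
  have edges: "card ?E = card I * m"
    by (rule card_path_decomposition[OF pd finite_hypercube_edges \<open>m > 0\<close>])
  have "2 * card ?E = 2 * (q * 2 ^ (q - 1))"
    using card_hypercube_edges[of q] \<open>q > 0\<close> by (cases q) auto
  then have "m dvd q * 2 ^ (q - 1)"
    unfolding edges by (simp add: dvd_def) (metis mult.commute)
  moreover
  have "card (hypercube_vertices q) \<le> 2 * card I"
    by (rule card_odd_degree_path_decomposition[OF pd finite_hypercube_edges \<open>m > 0\<close>])
      (simp add: degree_hypercube \<open>odd q\<close>)
  then have "2 ^ q * m \<le> 2 * (card I * m)"
    by (simp add: card_hypercube_vertices)
  then have "m \<le> q"
    by (simp add: edges[symmetric] card_hypercube_edges)
  ultimately show ?thesis by simp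
qed

end
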